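(* For every finite set $P\subset\mathbb{R}^d$ of even cardinality, $$\max_{M}\sum_{\{u,v\}\in M}\|u-v\|\;\le\;\min_{c\in\mathbb{R}^d}\sum_{p\in P}\|c-p\|\;\le\;\sqrt2\,\max_{M}\sum_{\{u,v\}\in M}\|u-v\|,$$ where the maxima range over all matchings $M$ of the complete graph on $P$.
   Context: Norms are Euclidean. *)

theory Defs
  imports "HOL-Analysis.Analysis"
begin

definition complete_edges :: "'a set \<Rightarrow> 'a set set" where
  "complete_edges P = {e. \<exists>u v. e = {u, v} \<and> u \<noteq> v \<and> u \<in> P \<and> v \<in> P}"

definition is_matching :: "'a set \<Rightarrow> 'a set set \<Rightarrow> bool" where
  "is_matching P M \<longleftrightarrow> M \<subseteq> complete_edges P \<and>
     (\<forall>e\<in>M. \<forall>f\<in>M. e \<noteq> f \<longrightarrow> e \<inter> f = {})"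

definition edge_length :: "'a::real_normed_vector set \<Rightarrow> real" where
  "edge_length e = (THE l. \<exists>u v. e = {u, v} \<and> l = norm (u - v))"

definition matching_weight :: "'a::real_normed_vector set set \<Rightarrow> real" where
  "matching_weight M = (\<Sum>e\<in>M. edge_length e)"

definition max_matching :: "'a::real_normed_vector set \<Rightarrow> real" where
  "max_matching P = Max (matching_weight ` {M. is_matching P M})"

end

theory Submission
  imports Defs
begin

(*
  Lower bound: by the triangle inequality, each edge {u, v} of a matching is no longer than
  |c - u| + |c - v|, and the edges of a matching are disjoint.

  Upper bound: among the perfect matchings, viewed as fixed-point-free involutions s of P, take
  one maximising the sum of squared edge lengths. Exchanging two of its edges {p, s p}, {q, s q}
  for {p, q}, {s p, s q} or for {p, s q}, {s p, q} does not increase that sum, which gives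
  2 (<p, s p> + <q, s q>) <= <p + s p, q + s q>. Let d p = |p - s p| and let x be the centroid of
  P with weights 1 / d p. Summing the exchange inequality with weights 1 / (d p d q) yields
  sum |x - p|^2 / d p <= (sum d p) / 2, and Cauchy-Schwarz turns this into
  sum |x - p| <= (sum d p) / sqrt 2 = sqrt 2 * (weight of s), since every edge is counted twice
  in sum d p.
*)

lemma Cauchy_Schwarz_ineq_sum_div:
  fixes u d :: "'i \<Rightarrow> real"
  assumes "\<forall>i\<in>I. d i > 0"
  shows "(\<Sum>i\<in>I. u i)\<^sup>2 \<le> (\<Sum>i\<in>I. d i) * (\<Sum>i\<in>I. (u i)\<^sup>2 / d i)"
proof -
  have "(\<Sum>i\<in>I. u i) = (\<Sum>i\<in>I. sqrt (d i) * (u i / sqrt (d i)))"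
    using assms by (intro sum.cong) auto
  moreover have "(\<Sum>i\<in>I. (sqrt (d i))\<^sup>2) = (\<Sum>i\<in>I. d i)"
    and "(\<Sum>i\<in>I. (u i / sqrt (d i))\<^sup>2) = (\<Sum>i\<in>I. (u i)\<^sup>2 / d i)"
    using assms by (auto intro!: sum.cong simp: power_divide)
  ultimately show ?thesis
    using Cauchy_Schwarz_ineq_sum[of "\<lambda>i. sqrt (d i)" "\<lambda>i. u i / sqrt (d i)" I] by simp
qed

lemma weighted_sq_dist_centroid:
  fixes P :: "'a::real_inner set"
  assumes "sum w P \<noteq> 0"
  shows "(\<Sum>p\<in>P. w p * (norm ((1 / sum w P) *\<^sub>R (\<Sum>q\<in>P. w q *\<^sub>R q) - p))\<^sup>2)
       = (\<Sum>p\<in>P. w p * (norm p)\<^sup>2) - (norm (\<Sum>p\<in>P. w p *\<^sub>R p))\<^sup>2 / sum w P"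
proof -
  define S where "S = sum w P"
  define y where "y = (\<Sum>p\<in>P. w p *\<^sub>R p)"
  define x where "x = (1 / S) *\<^sub>R y"
  have "(\<Sum>p\<in>P. w p * (norm (x - p))\<^sup>2)
      = (\<Sum>p\<in>P. w p * inner x x - 2 * inner x (w p *\<^sub>R p) + w p * (norm p)\<^sup>2)"
    by (intro sum.cong) (auto simp: power2_norm_eq_inner inner_diff_left inner_diff_right
        inner_commute algebra_simps)
  also have "\<dots> = S * inner x x - 2 * inner x y + (\<Sum>p\<in>P. w p * (norm p)\<^sup>2)"
    by (simp add: S_def y_def sum.distrib sum_subtractf sum_distrib_right inner_sum_right
        sum_distrib_left)
  also have "\<dots> = (\<Sum>p\<in>P. w p * (norm p)\<^sup>2) - (norm y)\<^sup>2 / S"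
    using assms by (simp add: x_def S_def field_simps power2_eq_square flip: power2_norm_eq_inner)
  finally show ?thesis by (simp add: x_def y_def S_def)
qed

lemma geometric_median_exists:
  fixes P :: "'a::{real_normed_vector, heine_borel} set"
  assumes "finite P"
  shows "\<exists>c. \<forall>c'. (\<Sum>p\<in>P. norm (c - p)) \<le> (\<Sum>p\<in>P. norm (c' - p))"
proof (cases "P = {}")
  case False
  then obtain a where "a \<in> P" by blast
  define f where "f c = (\<Sum>p\<in>P. norm (c - p))" for c
  define R where "R = norm a + f 0"
  have "R \<ge> 0" by (simp add: R_def f_def sum_nonneg)
  have "continuous_on (cball 0 R) f" unfolding f_def by (intro continuous_intros)
  then obtain c where "c \<in> cball 0 R" and c_min: "\<forall>y\<in>cball 0 R. f c \<le> f y"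
    using continuous_attains_inf[of "cball 0 R" f] \<open>R \<ge> 0\<close> by auto
  have "f c \<le> f y" for y
  proof (cases "y \<in> cball 0 R")
    case False
    have "norm y - norm a \<le> f y"
      using norm_triangle_ineq2[of y a] member_le_sum[of a P "\<lambda>p. norm (y - p)"] \<open>a \<in> P\<close> assms
      by (simp add: f_def)
    moreover have "f c \<le> f 0" using c_min \<open>R \<ge> 0\<close> by simp
    ultimately show ?thesis using False by (simp add: R_def)
  qed (use c_min in blast)
  then show ?thesis unfolding f_def by blast
qed simp

(* Perfect matchings of P as fixed-point-free involutions; being extensional (undefined off P)
   makes them finitely many. *)
definition pairings :: "'a set \<Rightarrow> ('a \<Rightarrow> 'a) set" where
  "pairings P = {s \<in> P \<rightarrow>\<^sub>E P. \<forall>p\<in>P. s p \<noteq> p \<and> s (s p) = p}"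

lemma pairingsD:
  assumes "s \<in> pairings P" "p \<in> P"
  shows "s p \<in> P" "s p \<noteq> p" "s (s p) = p"
  using assms by (auto simp: pairings_def)

lemma finite_pairings: "finite P \<Longrightarrow> finite (pairings P)"
  unfolding pairings_def by (rule finite_subset[OF _ finite_PiE]) auto

lemma pairing_insert2:
  assumes "s \<in> pairings Q" "a \<notin> Q" "b \<notin> Q" "a \<noteq> b"
  shows "s(a := b, b := a) \<in> pairings (insert a (insert b Q))"
  using assms by (auto simp: pairings_def PiE_def extensional_def Pi_def)

lemma pairings_nonempty:
  assumes "finite P" "even (card P)"
  shows "pairings P \<noteq> {}"
proof -
  obtain n where "card P = 2 * n" using assms(2) by blast
  with assms(1) show ?thesis
  proof (induction n arbitrary: P)
    case 0
    then have "(\<lambda>_. undefined) \<in> pairings P" by (simp add: pairings_def)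
    then show ?case by blast
  next
    case (Suc n)
    then obtain a where a: "a \<in> P" by fastforce
    with Suc.prems have "card (P - {a}) = Suc (2 * n)" by simp
    then obtain b where b: "b \<in> P" "b \<noteq> a"
      by (metis card.empty ex_in_conv nat.distinct(1) DiffE singletonI)
    define Q where "Q = P - {a, b}"
    have P: "P = insert a (insert b Q)" using a b by (auto simp: Q_def)
    have "card Q = 2 * n" using Suc.prems a b by (simp add: Q_def card_Diff_subset)
    then obtain s where "s \<in> pairings Q" using Suc.IH[of Q] Suc.prems by (auto simp: Q_def)
    then have "s(a := b, b := a) \<in> pairings P"
      unfolding P using b by (intro pairing_insert2) (auto simp: Q_def)
    then show ?case by blast
  qed
qed

lemma pairing_swap:
  assumes s: "s \<in> pairings P" and "a \<in> P" "c \<in> P" "c \<noteq> a" "c \<noteq> s a"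
  shows "s(a := c, c := a, s a := s c, s c := s a) \<in> pairings P"
proof -
  note sD = pairingsD[OF s]
  have distinct: "a \<noteq> s a" "c \<noteq> s c" "a \<noteq> s c" "s a \<noteq> s c" using assms sD by metis+
  define t where "t = s(a := c, c := a, s a := s c, s c := s a)"
  have t_out: "t p = s p" if "p \<notin> {a, c, s a, s c}" for p
    using that by (simp add: t_def)
  have "t p \<in> P \<and> t p \<noteq> p \<and> t (t p) = p" if "p \<in> P" for p
  proof (cases "p \<in> {a, c, s a, s c}")
    case True
    then show ?thesis using assms sD distinct by (auto simp: t_def)
  next
    case False
    have "s p = a \<Longrightarrow> p = s a" "s p = c \<Longrightarrow> p = s c"
      and "s p = s a \<Longrightarrow> p = a" "s p = s c \<Longrightarrow> p = c"
      using sD(3) \<open>p \<in> P\<close> \<open>a \<in> P\<close> \<open>c \<in> P\<close> by metis+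
    with False have "s p \<notin> {a, c, s a, s c}" by auto
    then show ?thesis using False t_out sD \<open>p \<in> P\<close> by simp
  qed
  moreover have "t \<in> extensional P"
    using s assms by (auto simp: t_def pairings_def PiE_def extensional_def)
  ultimately show ?thesis by (auto simp: pairings_def t_def [symmetric] PiE_def Pi_def)
qed

lemma sum_pairing_reindex:
  assumes "s \<in> pairings P"
  shows "(\<Sum>p\<in>P. g (s p)) = (\<Sum>p\<in>P. g p)"
proof -
  have "bij_betw s P P"
    by (rule bij_betw_byWitness[where f' = s]) (use pairingsD[OF assms] in auto)
  then show ?thesis by (rule sum.reindex_bij_betw)
qed

definition pairing_sqlen :: "'a::real_normed_vector set \<Rightarrow> ('a \<Rightarrow> 'a) \<Rightarrow> real" where
  "pairing_sqlen P s = (\<Sum>p\<in>P. (norm (p - s p))\<^sup>2)"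

lemma max_pairing_exists:
  fixes P :: "'a::real_normed_vector set"
  assumes "finite P" "even (card P)"
  obtains s where "s \<in> pairings P" "\<forall>t\<in>pairings P. pairing_sqlen P t \<le> pairing_sqlen P s"
proof -
  let ?sqlen = "pairing_sqlen P"
  obtain s where "s \<in> pairings P" "Max (?sqlen ` pairings P) = ?sqlen s"
    using obtains_MAX[OF finite_pairings[OF assms(1)] pairings_nonempty[OF assms]] .
  moreover have "?sqlen t \<le> Max (?sqlen ` pairings P)" if "t \<in> pairings P" for t
    using that finite_pairings[OF assms(1)] by (intro Max_ge) auto
  ultimately show thesis using that by simp
qed

lemma max_pairing_swap_le:
  fixes P :: "'a::real_normed_vector set"
  assumes "finite P" and s: "s \<in> pairings P"
    and max: "\<forall>t\<in>pairings P. pairing_sqlen P t \<le> pairing_sqlen P s"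
    and "a \<in> P" "c \<in> P" "c \<noteq> a" "c \<noteq> s a"
  shows "(norm (a - c))\<^sup>2 + (norm (s a - s c))\<^sup>2 \<le> (norm (a - s a))\<^sup>2 + (norm (c - s c))\<^sup>2"
proof -
  note sD = pairingsD[OF s]
  have distinct: "a \<noteq> s a" "a \<noteq> s c" "c \<noteq> s c" "s a \<noteq> s c" using assms sD by metis+
  define t where "t = s(a := c, c := a, s a := s c, s c := s a)"
  define A where "A = {a, c, s a, s c}"
  let ?gain = "\<lambda>p. (norm (p - t p))\<^sup>2 - (norm (p - s p))\<^sup>2"
  have "pairing_sqlen P t - pairing_sqlen P s = (\<Sum>p\<in>P. ?gain p)"
    by (simp add: pairing_sqlen_def sum_subtractf)
  also have "\<dots> = (\<Sum>p\<in>A. ?gain p)"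
    using assms sD by (intro sum.mono_neutral_right) (auto simp: A_def t_def)
  also have "\<dots> = 2 * ((norm (a - c))\<^sup>2 + (norm (s a - s c))\<^sup>2)
                 - 2 * ((norm (a - s a))\<^sup>2 + (norm (c - s c))\<^sup>2)"
    using assms distinct sD by (simp add: A_def t_def norm_minus_commute)
  finally have gain: "pairing_sqlen P t - pairing_sqlen P s = \<dots>" .
  have "pairing_sqlen P t \<le> pairing_sqlen P s"
    using max pairing_swap[OF s \<open>a \<in> P\<close> \<open>c \<in> P\<close> \<open>c \<noteq> a\<close> \<open>c \<noteq> s a\<close>] by (simp add: t_def)
  with gain show ?thesis by (smt (verit))
qed

lemma max_pairing_inner_le:
  fixes P :: "'a::real_inner set"
  assumes "finite P" and s: "s \<in> pairings P"
    and max: "\<forall>t\<in>pairings P. pairing_sqlen P t \<le> pairing_sqlen P s"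
    and p: "p \<in> P" and q: "q \<in> P"
  shows "2 * (inner p (s p) + inner q (s q)) \<le> inner (p + s p) (q + s q)"
proof (cases "q = p \<or> q = s p")
  case True
  then have "inner (p + s p) (q + s q) - 2 * (inner p (s p) + inner q (s q)) = (norm (p - s p))\<^sup>2"
    using pairingsD(3)[OF s p]
    by (auto simp: power2_norm_eq_inner algebra_simps inner_commute)
  then show ?thesis by (smt (verit) zero_le_power2)
next
  case False
  note swap = max_pairing_swap_le[OF assms(1-3) p]
  have "(norm (p - q))\<^sup>2 + (norm (s p - s q))\<^sup>2 \<le> (norm (p - s p))\<^sup>2 + (norm (q - s q))\<^sup>2"
    using swap[OF q] False by blast
  moreover have "s q \<noteq> p" "s q \<noteq> s p"
    using False pairingsD(3)[OF s p] pairingsD(3)[OF s q] by metis+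
  then have "(norm (p - s q))\<^sup>2 + (norm (s p - q))\<^sup>2 \<le> (norm (p - s p))\<^sup>2 + (norm (s q - q))\<^sup>2"
    using swap[of "s q"] pairingsD[OF s q] by simp
  ultimately show ?thesis
    by (simp add: power2_norm_eq_inner algebra_simps inner_commute)
qed

lemma sum_pairing_reindex_invariant:
  assumes s: "s \<in> pairings P" and w_swap: "\<forall>p\<in>P. w (s p) = w p"
  shows "(\<Sum>p\<in>P. h (w p) (s p)) = (\<Sum>p\<in>P. h (w p) p)"
proof -
  have "(\<Sum>p\<in>P. h (w p) (s p)) = (\<Sum>p\<in>P. h (w (s p)) (s p))"
    using w_swap by (intro sum.cong) auto
  also have "\<dots> = (\<Sum>p\<in>P. h (w p) p)" by (rule sum_pairing_reindex[OF s])
  finally show ?thesis .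
qed

lemma pairing_weighted_cross_le:
  fixes P :: "'a::real_inner set"
  assumes s: "s \<in> pairings P"
    and pair_le: "\<forall>p\<in>P. \<forall>q\<in>P. 2 * (inner p (s p) + inner q (s q)) \<le> inner (p + s p) (q + s q)"
    and w_nonneg: "\<forall>p\<in>P. w p \<ge> 0" and w_swap: "\<forall>p\<in>P. w (s p) = w p"
  shows "sum w P * (\<Sum>p\<in>P. w p * inner p (s p)) \<le> (norm (\<Sum>p\<in>P. w p *\<^sub>R p))\<^sup>2"
proof -
  define y where "y = (\<Sum>p\<in>P. w p *\<^sub>R p)"
  have "(\<Sum>p\<in>P. w p *\<^sub>R (p + s p)) = 2 *\<^sub>R y"
    using sum_pairing_reindex_invariant[OF s w_swap, of scaleR]
    by (simp add: y_def scaleR_add_right sum.distrib scaleR_2)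
  then have "(norm (2 *\<^sub>R y))\<^sup>2 = (\<Sum>p\<in>P. \<Sum>q\<in>P. w p * (w q * inner (q + s q) (p + s p)))"
    unfolding power2_norm_eq_inner
    by (simp flip: \<open>_ = 2 *\<^sub>R y\<close> add: inner_sum_left inner_sum_right sum_distrib_left mult.assoc)
  then have "4 * (norm y)\<^sup>2 = (\<Sum>p\<in>P. \<Sum>q\<in>P. w p * (w q * inner (q + s q) (p + s p)))"
    by (simp add: power_mult_distrib)
  also have "\<dots> \<ge> (\<Sum>p\<in>P. \<Sum>q\<in>P. w p * (w q * (2 * (inner q (s q) + inner p (s p)))))"
    using pair_le w_nonneg by (intro sum_mono mult_left_mono) auto
  also have "(\<Sum>p\<in>P. \<Sum>q\<in>P. w p * (w q * (2 * (inner q (s q) + inner p (s p)))))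
      = 2 * (sum w P * (\<Sum>q\<in>P. w q * inner q (s q)))
        + 2 * ((\<Sum>p\<in>P. w p * inner p (s p)) * sum w P)"
    unfolding sum_product by (simp add: algebra_simps sum.distrib sum_distrib_left)
  finally show ?thesis by (simp add: y_def)
qed

lemma pairing_weighted_sq_norm:
  fixes P :: "'a::real_inner set"
  assumes s: "s \<in> pairings P" and w_swap: "\<forall>p\<in>P. w (s p) = w p"
  shows "(\<Sum>p\<in>P. w p * (norm p)\<^sup>2)
       = (\<Sum>p\<in>P. w p * inner p (s p)) + (\<Sum>p\<in>P. w p * (norm (p - s p))\<^sup>2) / 2"
proof -
  have "2 * (\<Sum>p\<in>P. w p * (norm p)\<^sup>2) = (\<Sum>p\<in>P. w p * ((norm p)\<^sup>2 + (norm (s p))\<^sup>2))"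
    using sum_pairing_reindex_invariant[OF s w_swap, of "\<lambda>a p. a * (norm p)\<^sup>2"]
    by (simp add: distrib_left sum.distrib)
  also have "\<dots> = (\<Sum>p\<in>P. 2 * (w p * inner p (s p)) + w p * (norm (p - s p))\<^sup>2)"
    by (intro sum.cong) (simp_all add: power2_norm_eq_inner inner_diff_left inner_diff_right
        inner_commute algebra_simps)
  also have "\<dots> = 2 * (\<Sum>p\<in>P. w p * inner p (s p)) + (\<Sum>p\<in>P. w p * (norm (p - s p))\<^sup>2)"
    by (simp add: sum.distrib sum_distrib_left)
  finally show ?thesis by linarith
qed

lemma pairing_centroid_bound:
  fixes P :: "'a::real_inner set"
  assumes "finite P" and s: "s \<in> pairings P"
    and pair_le: "\<forall>p\<in>P. \<forall>q\<in>P. 2 * (inner p (s p) + inner q (s q)) \<le> inner (p + s p) (q + s q)"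
  shows "\<exists>x. (\<Sum>p\<in>P. (norm (x - p))\<^sup>2 / norm (p - s p)) \<le> (\<Sum>p\<in>P. norm (p - s p)) / 2"
proof (cases "P = {}")
  case False
  define d where "d p = norm (p - s p)" for p
  define w where "w p = 1 / d p" for p
  define S where "S = sum w P"
  define y where "y = (\<Sum>p\<in>P. w p *\<^sub>R p)"
  define x where "x = (1 / S) *\<^sub>R y"
  have d_pos: "d p > 0" if "p \<in> P" for p
    using pairingsD(2)[OF s that] by (simp add: d_def)
  have w_swap: "\<forall>p\<in>P. w (s p) = w p"
    using pairingsD(3)[OF s] by (simp add: w_def d_def norm_minus_commute)
  have w_d: "(\<Sum>p\<in>P. w p * (d p)\<^sup>2) = (\<Sum>p\<in>P. d p)"
    using d_pos by (intro sum.cong) (simp_all add: w_def power2_eq_square)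
  have "S > 0" unfolding S_def w_def using d_pos \<open>finite P\<close> False by (intro sum_pos) auto
  have "(\<Sum>p\<in>P. (norm (x - p))\<^sup>2 / d p) = (\<Sum>p\<in>P. w p * (norm (x - p))\<^sup>2)"
    by (simp add: w_def)
  also have "\<dots> = (\<Sum>p\<in>P. w p * (norm p)\<^sup>2) - (norm y)\<^sup>2 / S"
    using weighted_sq_dist_centroid[of w P] \<open>S > 0\<close> by (simp add: x_def y_def S_def)
  also have "\<dots> \<le> (\<Sum>p\<in>P. w p * (norm p)\<^sup>2) - (\<Sum>p\<in>P. w p * inner p (s p))"
    using pairing_weighted_cross_le[OF s pair_le _ w_swap] d_pos \<open>S > 0\<close>
    by (simp add: S_def y_def w_def field_simps less_imp_le)
  also have "\<dots> = (\<Sum>p\<in>P. d p) / 2"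
    using pairing_weighted_sq_norm[OF s w_swap] w_d by (simp add: d_def)
  finally show ?thesis unfolding d_def by blast
qed simp

lemma edge_length_doubleton: "edge_length {u, v} = norm (u - v)"
  unfolding edge_length_def
proof (rule the_equality)
  fix l assume "\<exists>u' v'. {u, v} = {u', v'} \<and> l = norm (u' - v')"
  then show "l = norm (u - v)" by (auto simp: doubleton_eq_iff norm_minus_commute)
qed blast

lemma finite_matchings: "finite P \<Longrightarrow> finite {M. is_matching P M}"
  by (rule finite_subset[of _ "Pow (Pow P)"]) (auto simp: is_matching_def complete_edges_def)

lemma matching_weight_le_max_matching:
  "finite P \<Longrightarrow> is_matching P M \<Longrightarrow> matching_weight M \<le> max_matching P"
  unfolding max_matching_def by (intro Max_ge finite_imageI finite_matchings) auto

lemma max_matching_le: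
  assumes "finite P" "\<And>M. is_matching P M \<Longrightarrow> matching_weight M \<le> C"
  shows "max_matching P \<le> C"
proof -
  have "is_matching P {}" by (simp add: is_matching_def)
  then show ?thesis
    unfolding max_matching_def using assms finite_matchings[OF assms(1)] by (subst Max_le_iff) auto
qed

lemma matching_weight_le_sum_dist:
  assumes "is_matching P M" "finite P"
  shows "matching_weight M \<le> (\<Sum>p\<in>P. norm (c - p))"
proof -
  have edges: "M \<subseteq> complete_edges P" and disjoint: "\<forall>e\<in>M. \<forall>f\<in>M. e \<noteq> f \<longrightarrow> e \<inter> f = {}"
    using assms(1) by (auto simp: is_matching_def)
  then have "\<forall>e\<in>M. finite e" "\<Union>M \<subseteq> P" by (auto simp: complete_edges_def)
  have "matching_weight M \<le> (\<Sum>e\<in>M. \<Sum>p\<in>e. norm (c - p))"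
    unfolding matching_weight_def
  proof (rule sum_mono)
    fix e assume "e \<in> M"
    then obtain u v where "e = {u, v}" "u \<noteq> v" using edges by (auto simp: complete_edges_def)
    moreover have "norm (u - v) \<le> norm (c - u) + norm (c - v)"
      using norm_triangle_ineq4[of "c - v" "c - u"] by simp
    ultimately show "edge_length e \<le> (\<Sum>p\<in>e. norm (c - p))" by (simp add: edge_length_doubleton)
  qed
  also have "\<dots> = (\<Sum>p\<in>\<Union>M. norm (c - p))"
    using sum.Union_disjoint[OF \<open>\<forall>e\<in>M. finite e\<close> disjoint, of "\<lambda>p. norm (c - p)"] by simp
  also have "\<dots> \<le> (\<Sum>p\<in>P. norm (c - p))"
    using \<open>\<Union>M \<subseteq> P\<close> assms(2) by (intro sum_mono2) auto
  finally show ?thesis .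
qed

lemma is_matching_pairing:
  assumes s: "s \<in> pairings P"
  shows "is_matching P ((\<lambda>p. {p, s p}) ` P)"
proof -
  have "{p, s p} = {q, s q}" if "p \<in> P" "q \<in> P" "{p, s p} \<inter> {q, s q} \<noteq> {}" for p q
  proof -
    have "q = p \<or> q = s p"
      using that pairingsD(3)[OF s] by auto metis
    then show ?thesis using pairingsD(3)[OF s \<open>p \<in> P\<close>] by auto
  qed
  then show ?thesis
    unfolding is_matching_def complete_edges_def using pairingsD[OF s] by blast
qed

lemma matching_weight_pairing:
  assumes s: "s \<in> pairings P"
  shows "matching_weight ((\<lambda>p. {p, s p}) ` P) = (\<Sum>p\<in>P. norm (p - s p)) / 2"
proof -
  define M where "M = (\<lambda>p. {p, s p}) ` P"
  have disjoint: "\<forall>e\<in>M. \<forall>f\<in>M. e \<noteq> f \<longrightarrow> e \<inter> f = {}"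
    using is_matching_pairing[OF s] by (simp add: M_def is_matching_def)
  have "\<Union>M = P" using pairingsD[OF s] by (auto simp: M_def)
  then have "(\<Sum>p\<in>P. norm (p - s p)) = (\<Sum>e\<in>M. \<Sum>p\<in>e. norm (p - s p))"
    using sum.Union_disjoint[OF _ disjoint, of "\<lambda>p. norm (p - s p)"] by (simp add: M_def)
  also have "\<dots> = (\<Sum>e\<in>M. 2 * edge_length e)"
  proof (rule sum.cong)
    fix e assume "e \<in> M"
    then obtain p where "p \<in> P" "e = {p, s p}" by (auto simp: M_def)
    then show "(\<Sum>p\<in>e. norm (p - s p)) = 2 * edge_length e"
      using pairingsD[OF s \<open>p \<in> P\<close>] by (simp add: edge_length_doubleton norm_minus_commute)
  qed simp
  also have "\<dots> = 2 * matching_weight M"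
    by (simp add: matching_weight_def sum_distrib_left)
  finally show ?thesis by (simp add: M_def)
qed

lemma sum_dist_le_sqrt2_max_matching:
  fixes P :: "'a::real_inner set"
  assumes "finite P" "even (card P)"
  shows "\<exists>x. (\<Sum>p\<in>P. norm (x - p)) \<le> sqrt 2 * max_matching P"
proof -
  obtain s where s: "s \<in> pairings P"
    and max: "\<forall>t\<in>pairings P. pairing_sqlen P t \<le> pairing_sqlen P s"
    using max_pairing_exists[OF assms] .
  define D where "D = (\<Sum>p\<in>P. norm (p - s p))"
  obtain x where x: "(\<Sum>p\<in>P. (norm (x - p))\<^sup>2 / norm (p - s p)) \<le> D / 2"
    using pairing_centroid_bound[OF assms(1) s] max_pairing_inner_le[OF assms(1) s max]
    unfolding D_def by blast
  have "D \<ge> 0" by (simp add: D_def sum_nonneg)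
  have "(\<Sum>p\<in>P. norm (x - p))\<^sup>2 \<le> D * (\<Sum>p\<in>P. (norm (x - p))\<^sup>2 / norm (p - s p))"
    unfolding D_def using pairingsD(2)[OF s]
    by (intro Cauchy_Schwarz_ineq_sum_div) (metis zero_less_norm_iff right_minus_eq)
  also have "\<dots> \<le> D * (D / 2)"
    using x \<open>D \<ge> 0\<close> by (rule mult_left_mono)
  also have "\<dots> = (sqrt 2 * (D / 2))\<^sup>2"
    by (simp add: power_mult_distrib power2_eq_square)
  finally have "(\<Sum>p\<in>P. norm (x - p))\<^sup>2 \<le> (sqrt 2 * (D / 2))\<^sup>2" .
  then have "(\<Sum>p\<in>P. norm (x - p)) \<le> sqrt 2 * (D / 2)"
    by (rule power2_le_imp_le) (simp add: \<open>D \<ge> 0\<close>)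
  also have "sqrt 2 * (D / 2) \<le> sqrt 2 * max_matching P"
    using matching_weight_le_max_matching[OF assms(1) is_matching_pairing[OF s]]
      matching_weight_pairing[OF s] by (simp add: D_def)
  finally show ?thesis ..
qed

theorem mainTheorem7:
  fixes P :: "'a::euclidean_space set"
  assumes "finite P" and "even (card P)"
  shows "\<exists>c. (\<forall>c'. (\<Sum>p\<in>P. norm (c - p)) \<le> (\<Sum>p\<in>P. norm (c' - p)))
           \<and> max_matching P \<le> (\<Sum>p\<in>P. norm (c - p))
           \<and> (\<Sum>p\<in>P. norm (c - p)) \<le> sqrt 2 * max_matching P"
proof -
  obtain c where median: "\<forall>c'. (\<Sum>p\<in>P. norm (c - p)) \<le> (\<Sum>p\<in>P. norm (c' - p))"
    using geometric_median_exists[OF assms(1)] by blast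
  have "max_matching P \<le> (\<Sum>p\<in>P. norm (c - p))"
    using assms(1) by (intro max_matching_le matching_weight_le_sum_dist)
  moreover obtain x where "(\<Sum>p\<in>P. norm (x - p)) \<le> sqrt 2 * max_matching P"
    using sum_dist_le_sqrt2_max_matching[OF assms] by blast
  ultimately show ?thesis using median order_trans by blast
qed

end
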